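(* Let $\Gamma=(V,E,w)$ be a finite simple weighted digraph with vertex set $V=\{1,\dots,n\}$ and weights $0\le w_{ij}\le 1$ (with $w_{ij}=0$ iff $(i,j)\notin E$), and let $L=D-A$ be its graph Laplacian. Then $\Gamma$ is a complete dominance graph if and only if there exists a permutation matrix $P$ such that, for each $i=1,\dots,n$, $P\mathbf{v}_i$ is an eigenvector of $L$ for the eigenvalue $n-i$, where $\mathbf{v}_i=\sum_{k=1}^{i}\mathbf{e}_k$ and $\mathbf{e}_k$ is the $k$th standard basis vector of $\mathbb{R}^n$.
   Context: $d^{+}(i)=\sum_{j\in V} w_{ij}$, $D=\mathrm{diag}(d^{+}(1),\dots,d^{+}(n))$, $A=[w_{ij}]$, $L=D-A$. A tournament is a digraph such that for each pair of distinct vertices exactly one of $(i,j),(j,i)$ is an edge. A complete dominance graph is an acyclic tournament in which every edge has weight $1$. *)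

theory Defs
  imports "Jordan_Normal_Form.Char_Poly"
begin

text \<open>Vertices are 0,...,n-1 (0-based version of 1,...,n). A weighted digraph
  on n vertices is given by its weight function w; the edge set consists of
  the pairs with nonzero weight.\<close>

definition edges :: "nat \<Rightarrow> (nat \<Rightarrow> nat \<Rightarrow> real) \<Rightarrow> (nat \<times> nat) set" where
  "edges n w = {(i, j). i < n \<and> j < n \<and> w i j \<noteq> 0}"

definition out_degree :: "nat \<Rightarrow> (nat \<Rightarrow> nat \<Rightarrow> real) \<Rightarrow> nat \<Rightarrow> real" where
  "out_degree n w i = (\<Sum>j<n. w i j)"

definition adjacency_mat :: "nat \<Rightarrow> (nat \<Rightarrow> nat \<Rightarrow> real) \<Rightarrow> real mat" where
  "adjacency_mat n w = mat n n (\<lambda>(i, j). w i j)"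

definition degree_mat :: "nat \<Rightarrow> (nat \<Rightarrow> nat \<Rightarrow> real) \<Rightarrow> real mat" where
  "degree_mat n w = mat n n (\<lambda>(i, j). if i = j then out_degree n w i else 0)"

definition laplacian :: "nat \<Rightarrow> (nat \<Rightarrow> nat \<Rightarrow> real) \<Rightarrow> real mat" where
  "laplacian n w = degree_mat n w - adjacency_mat n w"

definition tournament :: "nat \<Rightarrow> (nat \<Rightarrow> nat \<Rightarrow> real) \<Rightarrow> bool" where
  "tournament n w = (\<forall>i<n. \<forall>j<n. i \<noteq> j \<longrightarrow>
      ((i, j) \<in> edges n w \<longleftrightarrow> (j, i) \<notin> edges n w))"

definition complete_dominance_graph :: "nat \<Rightarrow> (nat \<Rightarrow> nat \<Rightarrow> real) \<Rightarrow> bool" where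
  "complete_dominance_graph n w =
     (tournament n w \<and> acyclic (edges n w) \<and> (\<forall>(i, j) \<in> edges n w. w i j = 1))"

definition permutation_mat :: "nat \<Rightarrow> real mat \<Rightarrow> bool" where
  "permutation_mat n P = (P \<in> carrier_mat n n \<and>
     (\<forall>i<n. \<forall>j<n. P $$ (i, j) = 0 \<or> P $$ (i, j) = 1) \<and>
     (\<forall>i<n. \<exists>!j. j < n \<and> P $$ (i, j) = 1) \<and>
     (\<forall>j<n. \<exists>!i. i < n \<and> P $$ (i, j) = 1))"

text \<open>v_i = e_1 + ... + e_i (in 0-based coordinates: ones at positions 0..i-1).\<close>
definition ones_prefix :: "nat \<Rightarrow> nat \<Rightarrow> real vec" where
  "ones_prefix n i = vec n (\<lambda>k. if k < i then 1 else 0)"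

end

theory Submission
  imports Defs
begin

text \<open>
  A complete dominance graph is the same thing as a ranking: a bijection \<open>g\<close> of the vertices
  onto \<open>{0..<n}\<close> such that \<open>w a b = 1\<close> if \<open>g a < g b\<close> and \<open>w a b = 0\<close> otherwise. Given the
  graph, rank each vertex by the number of vertices dominating it; tournaments without cycles
  are transitive, so this count strictly increases along every edge.

  For a vertex set \<open>S\<close>, the Laplacian maps the indicator vector of \<open>S\<close> to the vector whose
  entry at \<open>a \<in> S\<close> is the weight going from \<open>a\<close> to the complement of \<open>S\<close>, and whose entry at
  \<open>a \<notin> S\<close> is minus the weight going from \<open>a\<close> into \<open>S\<close>. As the weights lie in \<open>[0, 1]\<close>,
  the indicator is an eigenvector for \<open>n - |S|\<close> exactly when every vertex of \<open>S\<close> sends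
  weight 1 to, and receives weight 0 from, every vertex outside \<open>S\<close>. If \<open>P\<close> is the permutation
  matrix of \<open>g\<close>, then \<open>P v\<^sub>i\<close> is the indicator of the \<open>i\<close> vertices of smallest rank, and the
  eigenvector conditions for \<open>i = 1, \<dots>, n\<close> together say precisely that \<open>g\<close> ranks \<open>w\<close>.
\<close>

definition indicator_vec :: "nat \<Rightarrow> nat set \<Rightarrow> real vec" where
  "indicator_vec n S = vec n (\<lambda>k. if k \<in> S then 1 else 0)"

definition perm_mat_of :: "nat \<Rightarrow> (nat \<Rightarrow> nat) \<Rightarrow> real mat" where
  "perm_mat_of n g = mat n n (\<lambda>(a, j). if g a = j then 1 else 0)"

definition ranking :: "nat \<Rightarrow> (nat \<Rightarrow> nat \<Rightarrow> real) \<Rightarrow> (nat \<Rightarrow> nat) \<Rightarrow> bool" where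
  "ranking n w g \<longleftrightarrow> bij_betw g {..<n} {..<n} \<and>
     (\<forall>a<n. \<forall>b<n. w a b = (if g a < g b then 1 else 0))"

lemma dim_indicator_vec [simp]: "dim_vec (indicator_vec n S) = n"
  and index_indicator_vec [simp]: "a < n \<Longrightarrow> indicator_vec n S $ a = (if a \<in> S then 1 else 0)"
  by (simp_all add: indicator_vec_def)

lemma laplacian_carrier_mat: "laplacian n w \<in> carrier_mat n n"
  unfolding laplacian_def degree_mat_def adjacency_mat_def by auto

lemma laplacian_mult_vec_index:
  assumes "x \<in> carrier_vec n" and "a < n"
  shows "(laplacian n w *\<^sub>v x) $ a = out_degree n w a * x $ a - (\<Sum>b<n. w a b * x $ b)"
proof -
  have "(laplacian n w *\<^sub>v x) $ a =
      (\<Sum>b<n. (if a = b then out_degree n w a else 0) * x $ b) - (\<Sum>b<n. w a b * x $ b)"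
    using assms
    by (simp add: laplacian_def degree_mat_def adjacency_mat_def scalar_prod_def
        atLeast0LessThan left_diff_distrib sum_subtractf)
  then show ?thesis
    using assms(2) by (simp add: if_distrib[of "\<lambda>c. c * _"] cong: if_cong)
qed

lemma laplacian_mult_indicator_vec:
  assumes "S \<subseteq> {..<n}" and "a < n"
  shows "(laplacian n w *\<^sub>v indicator_vec n S) $ a =
    (if a \<in> S then (\<Sum>b\<in>{..<n} - S. w a b) else - (\<Sum>b\<in>S. w a b))"
proof -
  have "(\<Sum>b<n. w a b * indicator_vec n S $ b) = (\<Sum>b\<in>S. w a b)"
    using assms by (simp add: indicator_vec_def if_distrib sum.If_cases Int_absorb1 cong: if_cong)
  moreover have "out_degree n w a = (\<Sum>b\<in>{..<n} - S. w a b) + (\<Sum>b\<in>S. w a b)"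
    using assms unfolding out_degree_def by (simp add: sum.subset_diff)
  ultimately show ?thesis
    using assms by (simp add: laplacian_mult_vec_index indicator_vec_def)
qed

lemma sum_eq_card_iff_all_one:
  fixes f :: "'a \<Rightarrow> real"
  assumes "finite A" and "\<And>x. x \<in> A \<Longrightarrow> f x \<le> 1"
  shows "sum f A = card A \<longleftrightarrow> (\<forall>x\<in>A. f x = 1)"
proof -
  have "sum f A = card A \<longleftrightarrow> (\<Sum>x\<in>A. 1 - f x) = 0"
    by (auto simp: sum_subtractf)
  also have "\<dots> \<longleftrightarrow> (\<forall>x\<in>A. f x = 1)"
    using assms by (subst sum_nonneg_eq_0_iff) auto
  finally show ?thesis .
qed

lemma eigenvector_laplacian_indicator_vec_iff:
  assumes weights: "\<And>a b. a < n \<Longrightarrow> b < n \<Longrightarrow> 0 \<le> w a b \<and> w a b \<le> 1"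
    and S: "S \<subseteq> {..<n}" "S \<noteq> {}"
  shows "eigenvector (laplacian n w) (indicator_vec n S) (real n - real (card S)) \<longleftrightarrow>
    (\<forall>a\<in>S. \<forall>b\<in>{..<n} - S. w a b = 1 \<and> w b a = 0)"
proof -
  let ?x = "indicator_vec n S" and ?T = "{..<n} - S"
  have "finite S" and "card S \<le> n"
    using S(1) finite_subset card_mono[OF finite_lessThan] by fastforce+
  have "?x \<noteq> 0\<^sub>v n"
    using S by (auto simp: indicator_vec_def vec_eq_iff)
  then have "eigenvector (laplacian n w) ?x (real n - real (card S)) \<longleftrightarrow>
      (\<forall>a<n. (laplacian n w *\<^sub>v ?x) $ a = (real n - real (card S)) * ?x $ a)"
    using laplacian_carrier_mat[of n w]
    by (auto simp: eigenvector_def vec_eq_iff indicator_vec_def)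
  also have "\<dots> \<longleftrightarrow> (\<forall>a\<in>S. (\<Sum>b\<in>?T. w a b) = card ?T) \<and> (\<forall>a\<in>?T. (\<Sum>b\<in>S. w a b) = 0)"
  proof -
    have "real n - real (card S) = card ?T"
      using S(1) \<open>finite S\<close> \<open>card S \<le> n\<close> by (simp add: card_Diff_subset)
    then show ?thesis
      using S(1) by (auto simp: laplacian_mult_indicator_vec)
  qed
  also have "\<dots> \<longleftrightarrow> (\<forall>a\<in>S. \<forall>b\<in>?T. w a b = 1) \<and> (\<forall>a\<in>?T. \<forall>b\<in>S. w a b = 0)"
  proof -
    have "(\<Sum>b\<in>?T. w a b) = card ?T \<longleftrightarrow> (\<forall>b\<in>?T. w a b = 1)" if "a \<in> S" for a
      using that S(1) weights by (intro sum_eq_card_iff_all_one) auto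
    then show ?thesis
      using S(1) \<open>finite S\<close> weights by (simp add: sum_nonneg_eq_0_iff subset_iff)
  qed
  finally show ?thesis by blast
qed

lemma card_rank_less:
  assumes "bij_betw g {..<n} {..<n}" and "i \<le> n"
  shows "card {a. a < n \<and> g a < i} = i"
proof -
  have "{..<i} \<subseteq> g ` {a. a < n \<and> g a < i}"
  proof
    fix j assume "j \<in> {..<i}"
    moreover from this have "j \<in> g ` {..<n}"
      using assms bij_betw_imp_surj_on by fastforce
    ultimately show "j \<in> g ` {a. a < n \<and> g a < i}" by auto
  qed
  then have "g ` {a. a < n \<and> g a < i} = {..<i}" by auto
  moreover have "inj_on g {a. a < n \<and> g a < i}"
    using bij_betw_imp_inj_on[OF assms(1)] by (rule inj_on_subset) auto
  ultimately show ?thesis using card_image by fastforce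
qed

lemma index_perm_mat_of [simp]:
  "a < n \<Longrightarrow> j < n \<Longrightarrow> perm_mat_of n g $$ (a, j) = (if g a = j then 1 else 0)"
  by (simp add: perm_mat_of_def)

lemma perm_mat_of_mult_ones_prefix:
  assumes "g ` {..<n} \<subseteq> {..<n}"
  shows "perm_mat_of n g *\<^sub>v ones_prefix n i = indicator_vec n {a. a < n \<and> g a < i}"
proof (rule eq_vecI)
  fix a assume "a < dim_vec (indicator_vec n {a. a < n \<and> g a < i})"
  then have a: "a < n" by simp
  then have "(perm_mat_of n g *\<^sub>v ones_prefix n i) $ a =
      (\<Sum>j<n. (if g a = j then 1 else 0) * (if j < i then 1 else 0))"
    by (simp add: perm_mat_of_def ones_prefix_def scalar_prod_def atLeast0LessThan)
  also have "\<dots> = (\<Sum>j<n. if g a = j then (if j < i then 1 else 0) else 0)"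
    by (intro sum.cong) auto
  finally show "(perm_mat_of n g *\<^sub>v ones_prefix n i) $ a = indicator_vec n {a. a < n \<and> g a < i} $ a"
    using assms a by auto
qed (simp add: perm_mat_of_def)

lemma permutation_mat_perm_mat_of:
  assumes "bij_betw g {..<n} {..<n}"
  shows "permutation_mat n (perm_mat_of n g)"
proof -
  have "\<exists>!j. j < n \<and> g a = j" if "a < n" for a
    using assms that bij_betwE by blast
  moreover have "\<exists>!a. a < n \<and> g a = j" if "j < n" for j
  proof -
    have "j \<in> g ` {..<n}"
      using bij_betw_imp_surj_on[OF assms] that by simp
    then obtain a where a: "a < n" "g a = j"
      by auto
    have "b = a" if "b < n" "g b = j" for b
      using inj_onD[OF bij_betw_imp_inj_on[OF assms]] a that by simp
    with a show ?thesis by blast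
  qed
  moreover have "(j < n \<and> perm_mat_of n g $$ (a, j) = 1) \<longleftrightarrow> (j < n \<and> g a = j)"
    if "a < n" for a j
    using that by (auto split: if_splits)
  moreover have "(a < n \<and> perm_mat_of n g $$ (a, j) = 1) \<longleftrightarrow> (a < n \<and> g a = j)"
    if "j < n" for a j
    using that by (auto split: if_splits)
  moreover have "perm_mat_of n g \<in> carrier_mat n n"
    by (simp add: perm_mat_of_def)
  ultimately show ?thesis
    unfolding permutation_mat_def by simp
qed

lemma permutation_matE:
  assumes "permutation_mat n P"
  obtains g where "bij_betw g {..<n} {..<n}" and "P = perm_mat_of n g"
proof -
  have P: "P \<in> carrier_mat n n"
    and P01: "\<And>a j. a < n \<Longrightarrow> j < n \<Longrightarrow> P $$ (a, j) = 0 \<or> P $$ (a, j) = 1"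
    and row: "\<And>a. a < n \<Longrightarrow> \<exists>!j. j < n \<and> P $$ (a, j) = 1"
    and col: "\<And>j. j < n \<Longrightarrow> \<exists>!a. a < n \<and> P $$ (a, j) = 1"
    using assms unfolding permutation_mat_def by simp_all
  define g where "g a = (THE j. j < n \<and> P $$ (a, j) = 1)" for a
  have g: "g a < n \<and> P $$ (a, g a) = 1" if "a < n" for a
    unfolding g_def using theI'[OF row[OF that]] .
  have P_eq: "P $$ (a, j) = (if g a = j then 1 else 0)" if "a < n" "j < n" for a j
  proof (cases "g a = j")
    case False
    then have "P $$ (a, j) \<noteq> 1"
      using row[OF that(1)] g[OF that(1)] that(2) by blast
    then show ?thesis using P01[OF that] False by auto
  qed (use g[OF that(1)] in simp)
  have "inj_on g {..<n}"
  proof (rule inj_onI)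
    fix a b assume "a \<in> {..<n}" "b \<in> {..<n}" "g a = g b"
    then have "a < n" "b < n" "P $$ (a, g a) = 1" "P $$ (b, g a) = 1" "g a < n"
      using g[of a] g[of b] by auto
    then show "a = b" using col[of "g a"] by blast
  qed
  moreover have "g ` {..<n} \<subseteq> {..<n}"
    using g by auto
  ultimately have "bij_betw g {..<n} {..<n}"
    unfolding bij_betw_def using endo_inj_surj[OF finite_lessThan] by blast
  moreover have "P = perm_mat_of n g"
    using P P_eq by (intro eq_matI) (auto simp: perm_mat_of_def)
  ultimately show thesis by (rule that)
qed

lemma eigenvector_laplacian_rank_prefix_iff:
  assumes weights: "\<And>a b. a < n \<Longrightarrow> b < n \<Longrightarrow> 0 \<le> w a b \<and> w a b \<le> 1"
    and g: "bij_betw g {..<n} {..<n}" and i: "i \<in> {1..n}"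
  shows "eigenvector (laplacian n w) (indicator_vec n {a. a < n \<and> g a < i}) (real n - real i)
    \<longleftrightarrow> (\<forall>a<n. \<forall>b<n. g a < i \<longrightarrow> i \<le> g b \<longrightarrow> w a b = 1 \<and> w b a = 0)"
proof -
  let ?S = "{a. a < n \<and> g a < i}"
  have "0 \<in> g ` {..<n}"
    using i bij_betw_imp_surj_on[OF g] by auto
  then have "?S \<noteq> {}"
    using i by force
  moreover have "?S \<subseteq> {..<n}"
    by auto
  ultimately have "eigenvector (laplacian n w) (indicator_vec n ?S) (real n - real i)
      \<longleftrightarrow> (\<forall>a\<in>?S. \<forall>b\<in>{..<n} - ?S. w a b = 1 \<and> w b a = 0)"
    using eigenvector_laplacian_indicator_vec_iff[of n w ?S, OF weights] card_rank_less[OF g, of i] i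
    by simp
  also have "\<dots> \<longleftrightarrow> (\<forall>a<n. \<forall>b<n. g a < i \<longrightarrow> i \<le> g b \<longrightarrow> w a b = 1 \<and> w b a = 0)"
    by (auto simp: not_less) (meson not_le)+
  finally show ?thesis .
qed

lemma ranking_iff_perm_mat_eigenvectors:
  assumes weights: "\<And>a b. a < n \<Longrightarrow> b < n \<Longrightarrow> 0 \<le> w a b \<and> w a b \<le> 1"
    and no_loops: "\<And>a. a < n \<Longrightarrow> w a a = 0"
    and g: "bij_betw g {..<n} {..<n}"
  shows "ranking n w g \<longleftrightarrow> (\<forall>i\<in>{1..n}.
    eigenvector (laplacian n w) (perm_mat_of n g *\<^sub>v ones_prefix n i) (real n - real i))"
proof -
  have g_range: "g ` {..<n} \<subseteq> {..<n}"
    using bij_betw_imp_surj_on[OF g] by simp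
  note prefix_iff = eigenvector_laplacian_rank_prefix_iff[of n w g, OF weights g]
  show ?thesis
    unfolding perm_mat_of_mult_ones_prefix[OF g_range]
  proof
    assume "ranking n w g"
    then show "\<forall>i\<in>{1..n}. eigenvector (laplacian n w)
        (indicator_vec n {a. a < n \<and> g a < i}) (real n - real i)"
      by (auto simp: prefix_iff ranking_def)
  next
    assume eigen: "\<forall>i\<in>{1..n}. eigenvector (laplacian n w)
        (indicator_vec n {a. a < n \<and> g a < i}) (real n - real i)"
    have beats: "w a b = 1 \<and> w b a = 0" if "a < n" "b < n" "g a < g b" for a b
    proof -
      have "Suc (g a) \<in> {1..n}"
        using g_range that(1) by (auto simp: Suc_le_eq)
      then have "\<forall>a'<n. \<forall>b'<n. g a' < Suc (g a) \<longrightarrow> Suc (g a) \<le> g b' \<longrightarrow>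
          w a' b' = 1 \<and> w b' a' = 0"
        using eigen prefix_iff by blast
      then show ?thesis
        using that by (auto simp: Suc_le_eq)
    qed
    have "w a b = (if g a < g b then 1 else 0)" if ab: "a < n" "b < n" for a b
    proof -
      consider "g a < g b" | "g b < g a" | "a = b"
        using inj_onD[OF bij_betw_imp_inj_on[OF g], of a b] ab by (meson lessThan_iff linorder_neqE_nat)
      then show ?thesis
        by cases (simp_all add: beats[of a b] beats[of b a] no_loops ab)
    qed
    with g show "ranking n w g"
      by (simp add: ranking_def)
  qed
qed

lemma ranking_imp_complete_dominance_graph:
  assumes "ranking n w g"
  shows "complete_dominance_graph n w"
proof -
  have g_inj: "inj_on g {..<n}" and w: "\<And>a b. a < n \<Longrightarrow> b < n \<Longrightarrow> w a b = (if g a < g b then 1 else 0)"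
    using assms by (auto simp: ranking_def bij_betw_def)
  have E: "edges n w = {(a, b). a < n \<and> b < n \<and> g a < g b}"
    by (auto simp: edges_def w split: if_splits)
  have "tournament n w"
    unfolding tournament_def
  proof (intro allI impI)
    fix a b assume "a < n" "b < n" "a \<noteq> b"
    then have "g a \<noteq> g b"
      using inj_onD[OF g_inj] by auto
    with \<open>a < n\<close> \<open>b < n\<close> show "(a, b) \<in> edges n w \<longleftrightarrow> (b, a) \<notin> edges n w"
      by (auto simp: E)
  qed
  moreover have "acyclic (edges n w)"
    by (rule acyclic_subset[OF wf_acyclic[OF wf_inv_image[OF wf_less_than, of g]]])
      (auto simp: E)
  moreover have "\<forall>(a, b) \<in> edges n w. w a b = 1"
    by (auto simp: E w)
  ultimately show ?thesis
    unfolding complete_dominance_graph_def by blast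
qed

lemma tournament_acyclic_imp_trans:
  assumes "tournament n w" and "acyclic (edges n w)"
  shows "trans (edges n w)"
proof (rule transI)
  fix a b c assume ab: "(a, b) \<in> edges n w" and bc: "(b, c) \<in> edges n w"
  have ac: "(a, c) \<in> (edges n w)\<^sup>+"
    using ab bc by (meson r_into_trancl trancl_into_trancl)
  then have "a \<noteq> c" and "(c, a) \<notin> edges n w"
    using assms(2) unfolding acyclic_def by (auto dest: trancl_into_trancl)
  then show "(a, c) \<in> edges n w"
    using assms(1) ab bc unfolding tournament_def edges_def by auto
qed

lemma card_predecessors_less:
  assumes "trans E" and "(a, a) \<notin> E" and "(a, b) \<in> E" and "finite {c. (c, b) \<in> E}"
  shows "card {c. (c, a) \<in> E} < card {c. (c, b) \<in> E}"
proof (rule psubset_card_mono[OF assms(4)])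
  show "{c. (c, a) \<in> E} \<subset> {c. (c, b) \<in> E}"
    using assms(1-3) by (auto dest: transD)
qed

lemma complete_dominance_graph_imp_ranking:
  assumes "complete_dominance_graph n w"
  obtains g where "ranking n w g"
proof -
  let ?E = "edges n w"
  have tour: "tournament n w" and acyc: "acyclic ?E" and one: "\<And>a b. (a, b) \<in> ?E \<Longrightarrow> w a b = 1"
    using assms unfolding complete_dominance_graph_def by auto
  have E_n: "?E \<subseteq> {..<n} \<times> {..<n}" and irrefl: "(a, a) \<notin> ?E" for a
    using acyc by (auto simp: edges_def acyclic_irrefl irrefl_def)
  define g where "g a = card {c. (c, a) \<in> ?E}" for a
  have less: "g a < g b" if "(a, b) \<in> ?E" for a b
    unfolding g_def using tournament_acyclic_imp_trans[OF tour acyc] irrefl that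
    by (intro card_predecessors_less) (auto intro: finite_subset[of _ "{..<n}"] dest: subsetD[OF E_n])
  have "g a < n" if "a < n" for a
  proof -
    have "g a \<le> card ({..<n} - {a})"
      unfolding g_def using E_n irrefl by (intro card_mono) auto
    then show ?thesis using that by simp
  qed
  moreover have "inj_on g {..<n}"
    using less tour unfolding tournament_def by (fastforce intro: inj_onI)
  ultimately have "bij_betw g {..<n} {..<n}"
    unfolding bij_betw_def using endo_inj_surj[OF finite_lessThan] by blast
  moreover have "w a b = (if g a < g b then 1 else 0)" if "a < n" "b < n" for a b
  proof (cases "(a, b) \<in> ?E")
    case True
    then show ?thesis using one less by auto
  next
    case False
    then have "w a b = 0"
      using that by (simp add: edges_def)
    moreover have "\<not> g a < g b"
    proof (cases "a = b")
      case False
      then have "(b, a) \<in> ?E"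
        using tour that \<open>(a, b) \<notin> ?E\<close> unfolding tournament_def by blast
      then show ?thesis using less[of b a] by simp
    qed simp
    ultimately show ?thesis by simp
  qed
  ultimately show thesis
    using that by (auto simp: ranking_def)
qed

theorem theorem3p2:
  fixes n :: nat and w :: "nat \<Rightarrow> nat \<Rightarrow> real"
  assumes weights: "\<And>i j. i < n \<Longrightarrow> j < n \<Longrightarrow> 0 \<le> w i j \<and> w i j \<le> 1"
    and no_loops: "\<And>i. i < n \<Longrightarrow> w i i = 0"
  shows "complete_dominance_graph n w \<longleftrightarrow>
    (\<exists>P. permutation_mat n P \<and>
       (\<forall>i\<in>{1..n}. eigenvector (laplacian n w) (P *\<^sub>v ones_prefix n i) (real n - real i)))"
proof
  assume "complete_dominance_graph n w"
  then obtain g where ranking: "ranking n w g"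
    by (rule complete_dominance_graph_imp_ranking)
  then have g: "bij_betw g {..<n} {..<n}"
    by (simp add: ranking_def)
  show "\<exists>P. permutation_mat n P \<and>
      (\<forall>i\<in>{1..n}. eigenvector (laplacian n w) (P *\<^sub>v ones_prefix n i) (real n - real i))"
    using permutation_mat_perm_mat_of[OF g] ranking
      ranking_iff_perm_mat_eigenvectors[of n w g, OF weights no_loops g] by blast
next
  assume "\<exists>P. permutation_mat n P \<and>
      (\<forall>i\<in>{1..n}. eigenvector (laplacian n w) (P *\<^sub>v ones_prefix n i) (real n - real i))"
  then obtain P where P: "permutation_mat n P"
    and eigen: "\<forall>i\<in>{1..n}. eigenvector (laplacian n w) (P *\<^sub>v ones_prefix n i) (real n - real i)"
    by blast
  obtain g where g: "bij_betw g {..<n} {..<n}" and "P = perm_mat_of n g"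
    using P by (rule permutation_matE)
  then have "ranking n w g"
    using ranking_iff_perm_mat_eigenvectors[of n w g, OF weights no_loops g] eigen by simp
  then show "complete_dominance_graph n w"
    by (rule ranking_imp_complete_dominance_graph)
qed

end
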